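(* (i) For every point $\langle y\rangle\in\mathcal Y$, the point $\langle F(y)\rangle$ of $\mathrm{PG}(W)$ belongs to $\mathcal E\setminus\mathcal C$. (ii) The map $\mathcal Y\to\mathcal E\setminus\mathcal C$, $\langle y\rangle\mapsto\langle F(y)\rangle$ (the projection of $\mathcal Y$ from the line $\mathrm{PG}(V)$), is a bijection.
   Context: $q$ is a prime power. Regard $\mathbb F_{q^6}$ as a $6$-dimensional $\mathbb F_q$-vector space and let $\Pi=\mathrm{PG}(\mathbb F_{q^6})\cong\mathrm{PG}(5,q)$, whose points are $\langle x\rangle=\mathbb F_q^*x$, $x\ne0$. Let $\mathcal Y=\{\langle b-1\rangle : b\in\mathbb F_{q^6},\ b^{q^2-q+1}=1,\ b\ne 1\}$. Let $F(X)=X^{q^2}-X^q+X$, an $\mathbb F_q$-linear map of $\mathbb F_{q^6}$; let $V=\ker F$ (a $2$-dimensional $\mathbb F_q$-subspace) and $W=F(\mathbb F_{q^6})=\{z : z+z^q=z^{q^3}+z^{q^4}\}$, a $4$-dimensional $\mathbb F_q$-subspace; $\mathrm{PG}(W)\cong\mathrm{PG}(3,q)$ is identified with the quotient of $\Pi$ by $\mathrm{PG}(V)$ via $\langle x\rangle\mapsto\langle F(x)\rangle$ for $x\notin V$. Let $\Phi(z)=z^{q^2}z+z^{q^2}z^{q}+z^{q}z^{q^3}$; for $z\in W$ one has $\Phi(z)\in\mathbb F_q$, and $\mathcal E=\{\langle z\rangle\in\mathrm{PG}(W):\Phi(z)=0\}$ is a quadric of $\mathrm{PG}(W)$. Note $\mathbb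 F_{q^3}\subseteq W$; let $\mathcal C=\{\langle z\rangle\in\mathcal E: z\in\mathbb F_{q^3}\}$, the section of $\mathcal E$ by the plane $\mathrm{PG}(\mathbb F_{q^3})$ (a non-degenerate conic). *)

theory Defs
  imports "HOL-Computational_Algebra.Primes"
begin

text \<open>The finite field of order q^6 is modelled by a finite field type 'a with CARD('a) = q^6.
  F_q is the subfield of elements fixed by x -> x^q.\<close>

definition subfieldq :: "nat \<Rightarrow> 'a::field set" where
  "subfieldq q = {c. c ^ q = c}"

definition pt :: "nat \<Rightarrow> 'a::field \<Rightarrow> 'a set" where
  "pt q x = {c * x | c. c \<in> subfieldq q \<and> c \<noteq> 0}"

definition Fmap :: "nat \<Rightarrow> 'a::field \<Rightarrow> 'a" where
  "Fmap q x = x ^ (q^2) - x ^ q + x"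

definition Phi :: "nat \<Rightarrow> 'a::field \<Rightarrow> 'a" where
  "Phi q z = z ^ (q^2) * z + z ^ (q^2) * z ^ q + z ^ q * z ^ (q^3)"

definition Wsp :: "nat \<Rightarrow> 'a::field set" where
  "Wsp q = range (Fmap q)"

definition Yset :: "nat \<Rightarrow> 'a::field set set" where
  "Yset q = {pt q (b - 1) | b. b ^ (q^2 - q + 1) = 1 \<and> b \<noteq> 1}"

definition Eset :: "nat \<Rightarrow> 'a::field set set" where
  "Eset q = {pt q z | z. z \<in> Wsp q \<and> z \<noteq> 0 \<and> Phi q z = 0}"

text \<open>Points of E lying in the plane PG(F_{q^3}).\<close>
definition Cset :: "nat \<Rightarrow> 'a::field set set" where
  "Cset q = {pt q z | z. z \<noteq> 0 \<and> z ^ (q^3) = z \<and> Phi q z = 0}"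

definition projF :: "nat \<Rightarrow> 'a::field set \<Rightarrow> 'a set" where
  "projF q P = Fmap q ` P"

end

theory Submission
  imports Defs "HOL-Number_Theory.Residues"
begin

text \<open>Write frob for the Frobenius map x \<mapsto> x^q, an automorphism whose sixth power is
  the identity. The condition b^(q^2 - q + 1) = 1 says frob^2 b * b = frob b, so the frob-orbit
  of b is b, frob b, frob b / b, 1 / b, 1 / frob b, b / frob b. From this one computes
  F(b - 1) = (b - frob b) (b - 1) / b, Phi(F(b - 1)) = 0 and
  frob^3 (F(b - 1)) = F(b - 1) / frob b. As frob b \<noteq> 1, the point <F(b - 1)> lies on E but
  not on C, whose points are fixed by frob^3. The quotient z / frob^3 z is unchanged when z is
  scaled by F_q, so it reads off frob b, and hence b, from the image point: the map is
  injective. Conversely, for <z> in E - C put b = frob^5 z / frob^2 z; the relation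
  z + frob z = frob^3 z + frob^4 z, valid on W, together with Phi(z) = Phi(frob^3 z) = 0,
  gives b^(q^2 - q + 1) = 1 and F(b - 1) / z \<in> F_q.\<close>

text \<open>The library's finite_field_power_card_eq_same needs the sort finite_field, which a
  type variable of sort {finite,field} cannot be shown to have.\<close>
lemma power_card_eq_self:
  fixes x :: "'a::{finite,field}"
  shows "x ^ card (UNIV :: 'a set) = x"
proof (cases "x = 0")
  case True
  then show ?thesis
    using finite_UNIV_card_ge_0[where 'a='a] by simp
next
  case False
  let ?U = "UNIV - {0::'a}"
  have "bij_betw ((*) x) ?U ?U"
    using False by (intro bij_betwI[where g="\<lambda>y. y / x"]) auto
  then have "(\<Prod>y\<in>?U. x * y) = \<Prod>?U"
    by (rule prod.reindex_bij_betw)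
  moreover have "(\<Prod>y\<in>?U. x * y) = x ^ card ?U * \<Prod>?U"
    by (simp add: prod.distrib)
  moreover have "\<Prod>?U \<noteq> 0"
    by simp
  ultimately have "x ^ card ?U = 1"
    by (metis mult_cancel_right2)
  moreover have "card (UNIV :: 'a set) = Suc (card ?U)"
    using finite_UNIV_card_ge_0[where 'a='a] by (simp add: card_Diff_singleton del: card_Diff_insert)
  ultimately show ?thesis
    by (metis power_Suc mult_1_right)
qed

lemma prime_power_card_freshmans_dream:
  fixes x y :: "'a::{finite,field}"
  assumes "prime p" and "card (UNIV :: 'a set) = p ^ n"
  shows "(x + y) ^ (p ^ k) = x ^ (p ^ k) + y ^ (p ^ k)"
proof -
  have char_prime: "prime CHAR('a)"
    by (intro prime_CHAR_semidom finite_imp_CHAR_pos) simp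
  moreover have "CHAR('a) dvd p ^ n"
    using CHAR_dvd_CARD[where 'a='a] assms(2) by simp
  ultimately have "CHAR('a) = p"
    using assms(1) prime_dvd_power primes_dvd_imp_eq by blast
  with char_prime show ?thesis
    by (intro freshmans_dream') simp_all
qed

text \<open>Here z_i stands for frob^i z: the hypotheses are the relation defining W, its image
  under frob^2, and Phi vanishing at z and at frob^3 z.\<close>
lemma quadric_orbit_identities:
  fixes z0 z1 z2 z3 z4 z5 :: "'a::comm_ring"
  assumes W: "z0 + z1 = z3 + z4" and W': "z2 + z3 = z5 + z0"
    and P: "z2 * z0 + z2 * z1 + z1 * z3 = 0" and P': "z5 * z3 + z5 * z4 + z4 * z0 = 0"
  shows "z1 * z3 * z5 = z0 * z2 * z4"
    and "(z0 - z3) * z0 * z2 = (z5 * z3 - z0 * z2) * z1"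
proof -
  have "z1 * z3 * z5 - z0 * z2 * z4 =
      z5 * (z2 * z0 + z2 * z1 + z1 * z3) - z2 * (z5 * z3 + z5 * z4 + z4 * z0)
      - z2 * z5 * (z0 + z1 - z3 - z4)"
    by (simp add: algebra_simps)
  then show "z1 * z3 * z5 = z0 * z2 * z4"
    using P P' W by simp
  have "(z5 * z3 - z0 * z2) * z1 - (z0 - z3) * z0 * z2 =
      z1 * z3 * ((z5 + z0) - (z2 + z3)) - (z0 - z3) * (z2 * z0 + z2 * z1 + z1 * z3)"
    by (simp add: algebra_simps)
  then show "(z0 - z3) * z0 * z2 = (z5 * z3 - z0 * z2) * z1"
    using P W' by simp
qed

locale frobenius6 =
  fixes q :: nat and frob :: "'a::field \<Rightarrow> 'a"
  defines frob_def: "frob \<equiv> \<lambda>x. x ^ q"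
  assumes q_pos: "0 < q"
    and frob_add: "frob (x + y) = frob x + frob y"
    and power_q6: "x ^ (q ^ 6) = x"
begin

lemma frob_mult: "frob (x * y) = frob x * frob y"
  by (simp add: frob_def power_mult_distrib)

lemma frob_1 [simp]: "frob 1 = 1"
  by (simp add: frob_def)

lemma frob_eq_0_iff [simp]: "frob x = 0 \<longleftrightarrow> x = 0"
  using q_pos by (simp add: frob_def)

lemma frob_0 [simp]: "frob 0 = 0"
  by simp

lemma frob_minus: "frob (- x) = - frob x"
  using frob_add[of "- x" x] by (simp add: eq_neg_iff_add_eq_0)

lemma frob_diff: "frob (x - y) = frob x - frob y"
  using frob_add[of x "- y"] by (simp add: frob_minus)

lemma frob_divide: "frob (x / y) = frob x / frob y"
  by (simp add: frob_def power_divide)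

lemmas frob_simps = frob_add frob_mult frob_minus frob_diff frob_divide

lemma power_q2: "x ^ (q ^ 2) = frob (frob x)"
  by (simp add: frob_def power2_eq_square power_mult)

lemma power_q3: "x ^ (q ^ 3) = frob (frob (frob x))"
  by (simp add: frob_def power3_eq_cube power_mult)

lemma frob6: "frob (frob (frob (frob (frob (frob x))))) = x"
proof -
  have "q ^ 6 = q * q * q * q * q * q"
    by (simp add: eval_nat_numeral)
  then have "x ^ (q * q * q * q * q * q) = x"
    using power_q6 by metis
  then show ?thesis
    by (simp add: frob_def power_mult)
qed

lemma frob_inject: "frob x = frob y \<longleftrightarrow> x = y"
  using frob6 by metis

lemma Fmap_eq: "Fmap q x = frob (frob x) - frob x + x"
  by (simp add: Fmap_def power_q2 frob_def)

lemma Phi_eq: "Phi q z = frob (frob z) * z + frob (frob z) * frob z + frob z * frob (frob (frob z))"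
  by (simp add: Phi_def power_q2 power_q3 frob_def)

lemma Phi_frob: "Phi q (frob z) = frob (Phi q z)"
  by (simp add: Phi_eq frob_simps)

lemma subfieldq_iff: "c \<in> subfieldq q \<longleftrightarrow> frob c = c"
  by (simp add: subfieldq_def frob_def)

lemma Fmap_mult_fixed: "frob c = c \<Longrightarrow> Fmap q (c * x) = c * Fmap q x"
  by (simp add: Fmap_eq frob_mult algebra_simps)

lemma Phi_mult_fixed: "frob c = c \<Longrightarrow> Phi q (c * z) = c\<^sup>2 * Phi q z"
  by (simp add: Phi_eq frob_mult algebra_simps power2_eq_square)

lemma pt_eq_image: "pt q x = (\<lambda>d. d * x) ` {d. frob d = d \<and> d \<noteq> 0}"
  unfolding pt_def subfieldq_iff by auto

lemma pt_self: "(x::'a) \<in> pt q x"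
  unfolding pt_eq_image by (auto intro: image_eqI[of _ _ 1])

lemma pt_eqE:
  assumes "pt q x = pt q (y::'a)"
  obtains c where "frob c = c" "c \<noteq> 0" "x = c * y"
  using pt_self[of x] assms unfolding pt_eq_image by auto

lemma pt_mult_fixed:
  assumes "frob c = c" and "c \<noteq> 0"
  shows "pt q (c * x) = pt q x"
proof -
  let ?G = "{d. frob d = d \<and> d \<noteq> 0}"
  have G_mult: "(\<lambda>d. d * c) ` ?G = ?G"
  proof
    show "(\<lambda>d. d * c) ` ?G \<subseteq> ?G"
      using assms by (auto simp: frob_mult)
    show "?G \<subseteq> (\<lambda>d. d * c) ` ?G"
    proof
      fix d assume "d \<in> ?G"
      then have "d / c \<in> ?G" and "d = d / c * c"
        using assms by (auto simp: frob_divide)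
      then show "d \<in> (\<lambda>d. d * c) ` ?G"
        by blast
    qed
  qed
  have "pt q (c * x) = (\<lambda>d. d * x) ` ((\<lambda>d. d * c) ` ?G)"
    unfolding pt_eq_image image_image by (simp add: mult.assoc)
  then show ?thesis
    unfolding G_mult pt_eq_image .
qed

lemma projF_pt: "projF q (pt q x) = pt q (Fmap q (x::'a))"
  unfolding projF_def pt_eq_image image_image by (simp add: Fmap_mult_fixed)

lemma YsetE:
  assumes "P \<in> Yset q"
  obtains b :: 'a where "P = pt q (b - 1)" and "b ^ (q\<^sup>2 - q + 1) = 1" and "b \<noteq> 1"
  using assms unfolding Yset_def by blast

text \<open>Since q^2 - q + 1 is the sixth cyclotomic polynomial at q, we call the elements b with
  b^(q^2 - q + 1) = 1 cyclotomic.\<close>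
lemma cyclotomic_iff: "b ^ (q\<^sup>2 - q + 1) = 1 \<longleftrightarrow> b \<noteq> 0 \<and> frob (frob b) * b = frob b"
proof -
  have "q \<le> q\<^sup>2"
    by (simp add: power2_eq_square)
  then have "q\<^sup>2 + 1 = (q\<^sup>2 - q + 1) + q"
    by simp
  have "frob (frob b) * b = b ^ (q\<^sup>2 + 1)"
    by (simp add: power_q2)
  also have "\<dots> = b ^ (q\<^sup>2 - q + 1) * frob b"
    unfolding \<open>q\<^sup>2 + 1 = _\<close> by (simp add: frob_def power_add)
  finally have "frob (frob b) * b = b ^ (q\<^sup>2 - q + 1) * frob b" .
  moreover have "b \<noteq> 0" if "b ^ (q\<^sup>2 - q + 1) = 1"
    using that by (cases "b = 0") simp_all
  ultimately show ?thesis
    by (metis frob_eq_0_iff mult_cancel_right mult_1_left)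
qed

lemma cyclotomic_frob2:
  assumes "(b::'a) ^ (q\<^sup>2 - q + 1) = 1"
  shows "b \<noteq> 0" and "frob b \<noteq> 0" and "frob (frob b) = frob b / b"
  using assms unfolding cyclotomic_iff by (auto simp: field_simps)

lemma Fmap_cyclotomic:
  assumes "(b::'a) ^ (q\<^sup>2 - q + 1) = 1"
  shows "Fmap q (b - 1) = (b - frob b) * (b - 1) / b"
    and "frob (Fmap q (b - 1)) = (b - 1) * (frob b - 1) / b"
    and "frob (frob (frob (Fmap q (b - 1)))) = Fmap q (b - 1) / frob b"
  using cyclotomic_frob2[OF assms]
  by (simp_all add: Fmap_eq frob_simps) (simp_all add: field_simps)

lemma Fmap_cyclotomic_neq_0:
  assumes "(b::'a) ^ (q\<^sup>2 - q + 1) = 1" and "b \<noteq> 1"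
  shows "Fmap q (b - 1) \<noteq> 0"
proof
  assume "Fmap q (b - 1) = 0"
  then have "frob b = b"
    using assms cyclotomic_frob2(1)[OF assms(1)] by (simp add: Fmap_cyclotomic(1))
  then show False
    using assms cyclotomic_frob2[OF assms(1)] by simp
qed

lemma Phi_Fmap_cyclotomic:
  assumes "(b::'a) ^ (q\<^sup>2 - q + 1) = 1"
  shows "Phi q (Fmap q (b - 1)) = 0"
  using cyclotomic_frob2[OF assms]
  by (simp add: Phi_eq Fmap_eq frob_simps) (simp add: field_simps)

lemma frob3_mult_fixed: "frob c = c \<Longrightarrow> frob (frob (frob (c * z))) = c * frob (frob (frob z))"
  by (simp add: frob_mult)

lemma pt_in_Cset_iff:
  assumes "z \<noteq> 0"
  shows "pt q z \<in> Cset q \<longleftrightarrow> frob (frob (frob z)) = z \<and> Phi q z = 0"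
proof
  assume "pt q z \<in> Cset q"
  then obtain w where w: "pt q z = pt q w" "frob (frob (frob w)) = w" "Phi q w = 0"
    unfolding Cset_def power_q3 by blast
  obtain c where "frob c = c" "c \<noteq> 0" "z = c * w"
    using w(1) by (rule pt_eqE)
  with w show "frob (frob (frob z)) = z \<and> Phi q z = 0"
    by (simp add: frob3_mult_fixed Phi_mult_fixed)
next
  assume "frob (frob (frob z)) = z \<and> Phi q z = 0"
  with assms show "pt q z \<in> Cset q"
    unfolding Cset_def power_q3 by blast
qed

lemma pt_Fmap_cyclotomic_in_Eset_minus_Cset:
  assumes "(b::'a) ^ (q\<^sup>2 - q + 1) = 1" and "b \<noteq> 1"
  shows "pt q (Fmap q (b - 1)) \<in> Eset q - Cset q"
proof -
  have w0: "Fmap q (b - 1) \<noteq> 0"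
    using assms by (rule Fmap_cyclotomic_neq_0)
  have "pt q (Fmap q (b - 1)) \<in> Eset q"
    unfolding Eset_def Wsp_def using w0 Phi_Fmap_cyclotomic[OF assms(1)] by blast
  moreover have "frob b \<noteq> 1"
    using assms(2) frob_inject[of b 1] by simp
  then have "frob (frob (frob (Fmap q (b - 1)))) \<noteq> Fmap q (b - 1)"
    using w0 cyclotomic_frob2[OF assms(1)] by (simp add: Fmap_cyclotomic(3)[OF assms(1)] field_simps)
  then have "pt q (Fmap q (b - 1)) \<notin> Cset q"
    using w0 pt_in_Cset_iff by blast
  ultimately show ?thesis
    by blast
qed

text \<open>The quotient z / frob^3 z is invariant under F_q-scaling and equals frob b at
  z = F(b - 1), so the image point determines b.\<close>
lemma pt_Fmap_cyclotomic_inject: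
  assumes "(b::'a) ^ (q\<^sup>2 - q + 1) = 1" "b \<noteq> 1"
    and "b' ^ (q\<^sup>2 - q + 1) = 1" "b' \<noteq> 1"
    and "pt q (Fmap q (b - 1)) = pt q (Fmap q (b' - 1))"
  shows "b = b'"
proof -
  obtain c where c: "frob c = c" "c \<noteq> 0" "Fmap q (b - 1) = c * Fmap q (b' - 1)"
    using assms(5) by (rule pt_eqE)
  have "Fmap q (b - 1) / frob b = frob (frob (frob (Fmap q (b - 1))))"
    using Fmap_cyclotomic(3)[OF assms(1)] by simp
  also have "\<dots> = c * (Fmap q (b' - 1) / frob b')"
    using c Fmap_cyclotomic(3)[OF assms(3)] by (simp add: frob3_mult_fixed)
  also have "\<dots> = Fmap q (b - 1) / frob b'"
    using c(3) by simp
  finally have "frob b = frob b'"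
    using Fmap_cyclotomic_neq_0[OF assms(1,2)] cyclotomic_frob2(2)[OF assms(1)]
      cyclotomic_frob2(2)[OF assms(3)] by (simp add: field_simps)
  then show ?thesis
    by (simp add: frob_inject)
qed

lemma Wsp_frob_relation:
  assumes "z \<in> Wsp q"
  shows "z + frob z = frob (frob (frob z)) + frob (frob (frob (frob z)))"
  using assms by (auto simp: Wsp_def Fmap_eq frob_simps frob6)

lemma cyclotomic_of_quadric_point:
  assumes "z \<in> Wsp q" and "z \<noteq> 0" and "Phi q z = 0"
  defines "b \<equiv> frob (frob (frob (frob (frob z)))) / frob (frob z)"
  shows "b ^ (q\<^sup>2 - q + 1) = 1"
    and "frob b = z / frob (frob (frob z))"
    and "(frob b - 1) * z = (b - frob b) * frob z"
proof -
  define z1 where "z1 = frob z"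
  define z2 where "z2 = frob z1"
  define z3 where "z3 = frob z2"
  define z4 where "z4 = frob z3"
  define z5 where "z5 = frob z4"
  have orbit: "frob z = z1" "frob z1 = z2" "frob z2 = z3" "frob z3 = z4" "frob z4 = z5"
      "frob z5 = z"
    using frob6 by (simp_all add: z1_def z2_def z3_def z4_def z5_def)
  have nonzero: "z1 \<noteq> 0" "z2 \<noteq> 0" "z3 \<noteq> 0" "z4 \<noteq> 0" "z5 \<noteq> 0"
    using assms(2) by (simp_all add: z1_def z2_def z3_def z4_def z5_def)
  have W: "z + z1 = z3 + z4"
    using Wsp_frob_relation[OF assms(1)] by (simp only: orbit)
  then have "frob (frob (z + z1)) = frob (frob (z3 + z4))"
    by simp
  then have W': "z2 + z3 = z5 + z"
    by (simp only: frob_add orbit)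
  have P: "z2 * z + z2 * z1 + z1 * z3 = 0"
    using assms(3) by (simp only: Phi_eq orbit)
  have "Phi q z3 = frob (frob (frob (Phi q z)))"
    by (simp only: z1_def z2_def z3_def Phi_frob)
  then have P': "z5 * z3 + z5 * z4 + z4 * z = 0"
    using assms(3) by (simp add: Phi_eq orbit)
  have b: "b = z5 / z2"
    by (simp add: b_def orbit)
  show frob_b: "frob b = z / z3"
    by (simp add: b frob_divide orbit)
  note identities = quadric_orbit_identities[OF W W' P P']
  have "frob (frob b) * b = z1 * z5 / (z4 * z2)"
    by (simp add: b frob_divide orbit)
  also have "\<dots> = frob b"
    using identities(1) nonzero unfolding frob_b by (simp add: field_simps)
  finally show "b ^ (q\<^sup>2 - q + 1) = 1"
    unfolding cyclotomic_iff using nonzero by (simp add: b)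
  have "(frob b - 1) * z = (z - z3) * z * z2 / (z2 * z3)"
    using nonzero unfolding frob_b by (simp add: field_simps)
  also have "\<dots> = (z5 * z3 - z * z2) * z1 / (z2 * z3)"
    using identities(2) by simp
  also have "\<dots> = (b - frob b) * frob z"
    using nonzero unfolding frob_b orbit(1) unfolding b by (simp add: field_simps)
  finally show "(frob b - 1) * z = (b - frob b) * frob z" .
qed

lemma pt_Fmap_cyclotomic_surj:
  assumes "z \<in> Wsp q" and "z \<noteq> 0" and "Phi q z = 0" and "frob (frob (frob z)) \<noteq> z"
  obtains b where "b ^ (q\<^sup>2 - q + 1) = 1" and "b \<noteq> 1" and "pt q (Fmap q (b - 1)) = pt q z"
proof -
  define b where "b = frob (frob (frob (frob (frob z)))) / frob (frob z)"
  note b = cyclotomic_of_quadric_point[OF assms(1-3), folded b_def]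
  have "frob b \<noteq> 1"
    using assms(2,4) unfolding b(2) by auto
  then have "b \<noteq> 1"
    by auto
  define l where "l = Fmap q (b - 1) / z"
  have "frob z \<noteq> 0"
    using assms(2) by simp
  have "frob l = (b - 1) * (frob b - 1) / (b * frob z)"
    by (simp add: l_def frob_divide Fmap_cyclotomic(2)[OF b(1)])
  also have "\<dots> = (b - 1) * ((frob b - 1) * z) / (b * z * frob z)"
    using assms(2) by simp
  also have "\<dots> = (b - 1) * ((b - frob b) * frob z) / (b * z * frob z)"
    unfolding b(3) ..
  also have "\<dots> = l"
    using \<open>frob z \<noteq> 0\<close> by (simp add: l_def Fmap_cyclotomic(1)[OF b(1)])
  finally have "frob l = l" .
  moreover have "l \<noteq> 0"
    using assms(2) Fmap_cyclotomic_neq_0[OF b(1) \<open>b \<noteq> 1\<close>] by (simp add: l_def)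
  ultimately have "pt q (Fmap q (b - 1)) = pt q z"
    using assms(2) pt_mult_fixed[of l z] by (simp add: l_def)
  with b(1) \<open>b \<noteq> 1\<close> show ?thesis
    by (rule that)
qed

lemma pt_Fmap_in_Eset_minus_Cset:
  assumes "pt q (y::'a) \<in> Yset q"
  shows "Fmap q y \<noteq> 0" and "pt q (Fmap q y) \<in> Eset q - Cset q"
proof -
  obtain b where b: "pt q y = pt q (b - 1)" "b ^ (q\<^sup>2 - q + 1) = 1" "b \<noteq> 1"
    using assms by (rule YsetE)
  obtain m where m: "frob m = m" "m \<noteq> 0" "y = m * (b - 1)"
    using b(1) by (rule pt_eqE)
  then have Fy: "Fmap q y = m * Fmap q (b - 1)"
    by (simp add: Fmap_mult_fixed)
  then show "Fmap q y \<noteq> 0"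
    using m(2) Fmap_cyclotomic_neq_0[OF b(2,3)] by simp
  show "pt q (Fmap q y) \<in> Eset q - Cset q"
    unfolding Fy pt_mult_fixed[OF m(1,2)] using b(2,3) by (rule pt_Fmap_cyclotomic_in_Eset_minus_Cset)
qed

lemma projF_Yset_bij: "bij_betw (projF q) (Yset q) (Eset q - Cset q :: 'a set set)"
  unfolding bij_betw_def
proof
  show "inj_on (projF q) (Yset q :: 'a set set)"
  proof (rule inj_onI)
    fix P P' :: "'a set"
    assume P: "P \<in> Yset q" and P': "P' \<in> Yset q" and eq: "projF q P = projF q P'"
    obtain b where b: "P = pt q (b - 1)" "b ^ (q\<^sup>2 - q + 1) = 1" "b \<noteq> 1"
      using P by (rule YsetE)
    obtain b' where b': "P' = pt q (b' - 1)" "b' ^ (q\<^sup>2 - q + 1) = 1" "b' \<noteq> 1"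
      using P' by (rule YsetE)
    have "pt q (Fmap q (b - 1)) = pt q (Fmap q (b' - 1))"
      using eq unfolding b(1) b'(1) projF_pt .
    with b(2,3) b'(2,3) have "b = b'"
      by (rule pt_Fmap_cyclotomic_inject)
    then show "P = P'"
      using b(1) b'(1) by simp
  qed
  show "projF q ` Yset q = (Eset q - Cset q :: 'a set set)"
  proof (intro equalityI subsetI)
    fix Q :: "'a set" assume "Q \<in> projF q ` Yset q"
    then obtain P where P: "P \<in> Yset q" and Q: "Q = projF q P"
      by blast
    obtain b where "P = pt q (b - 1)"
      using P by (blast elim: YsetE)
    then show "Q \<in> Eset q - Cset q"
      using P pt_Fmap_in_Eset_minus_Cset(2)[of "b - 1"] by (simp add: Q projF_pt)
  next
    fix Q :: "'a set" assume Q: "Q \<in> Eset q - Cset q"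
    then obtain z where z: "Q = pt q z" "z \<in> Wsp q" "z \<noteq> 0" "Phi q z = 0"
      unfolding Eset_def by blast
    have "frob (frob (frob z)) \<noteq> z"
      using Q z(1,3,4) pt_in_Cset_iff by blast
    then obtain b where b: "b ^ (q\<^sup>2 - q + 1) = 1" "b \<noteq> 1" "pt q (Fmap q (b - 1)) = pt q z"
      using z(2-4) pt_Fmap_cyclotomic_surj by blast
    have "pt q (b - 1) \<in> Yset q"
      unfolding Yset_def using b(1,2) by blast
    then have "projF q (pt q (b - 1)) \<in> projF q ` Yset q"
      by (rule imageI)
    then show "Q \<in> projF q ` Yset q"
      by (simp add: projF_pt b(3) z(1))
  qed
qed

end

theorem mainTheorem15:
  fixes q :: nat
  assumes "\<exists>p k. prime p \<and> k > 0 \<and> q = p ^ k"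
    and "card (UNIV :: 'a::{finite,field} set) = q ^ 6"
  shows "(\<forall>y::'a. pt q y \<in> Yset q \<longrightarrow>
            Fmap q y \<noteq> 0 \<and> projF q (pt q y) = pt q (Fmap q y) \<and>
            pt q (Fmap q y) \<in> Eset q - Cset q)
       \<and> bij_betw (projF q) (Yset q :: 'a set set) (Eset q - Cset q)"
proof -
  obtain p k where p: "prime p" and "k > 0" and q: "q = p ^ k"
    using assms(1) by blast
  then have "q > 0"
    by (simp add: prime_gt_0_nat)
  moreover have "card (UNIV :: 'a set) = p ^ (k * 6)"
    using assms(2) by (simp add: q power_mult)
  then have "(x + y) ^ q = x ^ q + y ^ q" for x y :: 'a
    using p by (simp add: q prime_power_card_freshmans_dream)
  moreover have "x ^ (q ^ 6) = x" for x :: 'a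
    using power_card_eq_self[of x] by (simp add: assms(2))
  ultimately interpret frobenius6 q "\<lambda>x::'a. x ^ q"
    by unfold_locales simp_all
  have "Fmap q y \<noteq> 0 \<and> projF q (pt q y) = pt q (Fmap q y) \<and> pt q (Fmap q y) \<in> Eset q - Cset q"
    if "pt q y \<in> Yset q" for y :: 'a
    using pt_Fmap_in_Eset_minus_Cset[OF that] projF_pt by simp
  with projF_Yset_bij show ?thesis
    by blast
qed

end
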